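(* Let $G=(V,E)$ be a cactus. Then the diameter $d(\mathrm{CUT}(G))$ of the 1-skeleton of $\mathrm{CUT}(G)$ satisfies $$\left\lfloor \frac{|V|}{2}\right\rfloor \le d(\mathrm{CUT}(G)) \le |V|-1.$$
   Context: For an undirected graph $G=(V,E)$ and $S\subseteq V$, $\delta(S)\subseteq E$ denotes the set of edges with exactly one endpoint in $S$, and $\mathbf v(S)\in\{0,1\}^{E}$ is its incidence vector ($v(S)_e=1$ iff $e\in\delta(S)$). The cut polytope is $\mathrm{CUT}(G)=\operatorname{conv}\{\mathbf v(S):S\subseteq V\}\subset\mathbb R^{E}$. The 1-skeleton of a polytope is the graph whose vertices are the polytope's vertices and whose edges are its one-dimensional faces; $d(\cdot)$ denotes the diameter (maximum shortest-path edge distance between two vertices) of this graph. A cactus is a connected graph in which every edge belongs to at most one simple cycle. *)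

theory Defs
  imports "HOL-Analysis.Analysis"
begin

definition graph :: "'v set \<Rightarrow> 'v set set \<Rightarrow> bool" where
  "graph V E \<longleftrightarrow> finite V \<and> (\<forall>e\<in>E. e \<subseteq> V \<and> card e = 2)"

definition gwalk :: "'v set set \<Rightarrow> 'v list \<Rightarrow> bool" where
  "gwalk E xs \<longleftrightarrow> xs \<noteq> [] \<and> (\<forall>i. Suc i < length xs \<longrightarrow> {xs ! i, xs ! Suc i} \<in> E)"

definition gconnected :: "'v set \<Rightarrow> 'v set set \<Rightarrow> bool" where
  "gconnected V E \<longleftrightarrow> V \<noteq> {} \<and>
     (\<forall>u\<in>V. \<forall>v\<in>V. \<exists>xs. gwalk E xs \<and> set xs \<subseteq> V \<and> hd xs = u \<and> last xs = v)"

definition simple_cycle :: "'v set set \<Rightarrow> 'v list \<Rightarrow> bool" where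
  "simple_cycle E vs \<longleftrightarrow> length vs \<ge> 3 \<and> distinct vs \<and>
     (\<forall>i < length vs. {vs ! i, vs ! ((i + 1) mod length vs)} \<in> E)"

definition cycle_edges :: "'v list \<Rightarrow> 'v set set" where
  "cycle_edges vs = {{vs ! i, vs ! ((i + 1) mod length vs)} | i. i < length vs}"

definition cactus :: "'v set \<Rightarrow> 'v set set \<Rightarrow> bool" where
  "cactus V E \<longleftrightarrow> graph V E \<and> gconnected V E \<and>
     (\<forall>e\<in>E. \<forall>C1 C2. simple_cycle E C1 \<longrightarrow> simple_cycle E C2 \<longrightarrow>
        e \<in> cycle_edges C1 \<longrightarrow> e \<in> cycle_edges C2 \<longrightarrow> cycle_edges C1 = cycle_edges C2)"

text \<open>Cuts and cut polytope.  R^E is represented inside real^('v set): the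
coordinates indexed by non-edges are identically 0 on the polytope.\<close>

definition delta :: "'v set set \<Rightarrow> 'v set \<Rightarrow> 'v set set" where
  "delta E S = {e \<in> E. card (e \<inter> S) = 1}"

definition cut_vec :: "'v set set \<Rightarrow> 'v set \<Rightarrow> real ^ ('v::finite set)" where
  "cut_vec E S = (\<chi> e. if e \<in> delta E S then 1 else 0)"

definition CUT :: "('v::finite) set \<Rightarrow> 'v set set \<Rightarrow> (real ^ ('v set)) set" where
  "CUT V E = convex hull {cut_vec E S | S. S \<subseteq> V}"

definition poly_vertices :: "('a::euclidean_space) set \<Rightarrow> 'a set" where
  "poly_vertices P = {x. {x} face_of P}"

definition skel_adj :: "('a::euclidean_space) set \<Rightarrow> 'a \<Rightarrow> 'a \<Rightarrow> bool" where
  "skel_adj P x y \<longleftrightarrow> x \<in> poly_vertices P \<and> y \<in> poly_vertices P \<and> x \<noteq> y \<and>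
     (\<exists>F. F face_of P \<and> aff_dim F = 1 \<and> x \<in> F \<and> y \<in> F)"

definition skel_walk :: "('a::euclidean_space) set \<Rightarrow> 'a list \<Rightarrow> bool" where
  "skel_walk P xs \<longleftrightarrow> xs \<noteq> [] \<and> set xs \<subseteq> poly_vertices P \<and>
     (\<forall>i. Suc i < length xs \<longrightarrow> skel_adj P (xs ! i) (xs ! Suc i))"

definition skel_dist :: "('a::euclidean_space) set \<Rightarrow> 'a \<Rightarrow> 'a \<Rightarrow> nat" where
  "skel_dist P x y = (LEAST n. \<exists>xs. skel_walk P xs \<and> hd xs = x \<and> last xs = y \<and> length xs = n + 1)"

definition skel_diameter :: "('a::euclidean_space) set \<Rightarrow> nat" where
  "skel_diameter P = Max {skel_dist P x y | x y. x \<in> poly_vertices P \<and> y \<in> poly_vertices P}"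

end

theory Submission
  imports Defs
begin

text \<open>Two cut vectors \<open>\<delta>(S)\<close> and \<open>\<delta>(T)\<close> span an edge of \<open>CUT(G)\<close> exactly when \<open>\<delta>(S \<triangle> T)\<close>
  is a bond, i.e. both \<open>S \<triangle> T\<close> and its complement induce connected subgraphs. Peeling off a
  vertex that is not a cut vertex shows that every vertex set is, up to complement, the symmetric
  difference of at most \<open>|V| - 1\<close> bond shores, which gives the upper bound. In a cactus a bond has
  at most two edges, since three edges of one bond would close up to two different cycles through
  a common edge. Hence every step in the 1-skeleton changes the size of the cut by at most two,
  and reaching a cut with \<open>|V| - 1\<close> edges (two-colour the vertices by the parity of their distance
  from a root) from the empty cut takes at least \<open>(|V| - 1) / 2\<close> steps.\<close>

section \<open>Faces of 0/1 polytopes\<close>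

definition binary_vecs :: "(real^'n) set" where
  "binary_vecs = {a. \<forall>i. a$i = 0 \<or> a$i = 1}"

lemma face_of_convex_hull_agreeing:
  fixes C :: "(real^'n) set"
  assumes "finite C" "C \<subseteq> binary_vecs" "s \<in> binary_vecs"
  shows "convex hull {a\<in>C. \<forall>i\<in>K. a$i = s$i} face_of convex hull C"
proof -
  define c :: "real^'n" where "c = (\<chi> i. if i \<in> K then (if s$i = 1 then 1 else -1) else 0)"
  define m where "m = (\<Sum>i\<in>K. s$i)"
  define D where "D = {a\<in>C. \<forall>i\<in>K. a$i = s$i}"
  have c_inner: "c \<bullet> a = m - (\<Sum>i\<in>K. \<bar>a$i - s$i\<bar>)" if "a \<in> C" for a
  proof -
    have bin: "(a$i = 0 \<or> a$i = 1) \<and> (s$i = 0 \<or> s$i = 1)" for i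
      using assms(2,3) that by (auto simp: binary_vecs_def)
    have "c$i * a$i = (if i \<in> K then s$i - \<bar>a$i - s$i\<bar> else 0)" for i
      using bin[of i] unfolding c_def by auto
    then have "c \<bullet> a = (\<Sum>i\<in>UNIV. if i \<in> K then s$i - \<bar>a$i - s$i\<bar> else 0)"
      by (simp add: inner_vec_def)
    then show ?thesis by (simp add: m_def sum.If_cases sum_subtractf)
  qed
  have c_le: "c \<bullet> a \<le> m" if "a \<in> C" for a
    using c_inner[OF that] sum_nonneg[of K "\<lambda>i. \<bar>a$i - s$i\<bar>"] by simp
  have c_eq: "c \<bullet> a = m \<longleftrightarrow> a \<in> D" if "a \<in> C" for a
    using c_inner[OF that] that by (simp add: D_def sum_nonneg_eq_0_iff)
  define F where "F = convex hull C \<inter> {x. c \<bullet> x = m}"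
  have F: "F face_of convex hull C"
    unfolding F_def
  proof (rule face_of_Int_supporting_hyperplane_le)
    have "convex hull C \<subseteq> {x. c \<bullet> x \<le> m}"
      using c_le by (intro hull_minimal convex_halfspace_le) blast
    then show "c \<bullet> x \<le> m" if "x \<in> convex hull C" for x using that by blast
  qed (rule convex_convex_hull)
  obtain C' where C': "C' \<subseteq> C" "F = convex hull C'"
    using face_of_convex_hull_subset[OF finite_imp_compact[OF assms(1)] F] by blast
  have "C' \<subseteq> D"
    using C' c_eq hull_subset[of C' convex] unfolding F_def by blast
  then have "F \<subseteq> convex hull D"
    unfolding C'(2) by (rule hull_mono)
  moreover have "D \<subseteq> F"
    using c_eq hull_subset[of C convex] unfolding F_def D_def by blast
  then have "convex hull D \<subseteq> F"
    using face_of_imp_convex[OF F] by (rule hull_minimal)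
  ultimately show ?thesis
    using F unfolding D_def by auto
qed

lemma face_of_convex_hull_binary_singleton:
  fixes C :: "(real^'n) set"
  assumes "finite C" "C \<subseteq> binary_vecs" "s \<in> C"
  shows "{s} face_of convex hull C"
proof -
  have "{a\<in>C. \<forall>i\<in>UNIV. a$i = s$i} = {s}"
    using assms(3) by (auto simp: vec_eq_iff)
  then show ?thesis
    using face_of_convex_hull_agreeing[OF assms(1,2), of s UNIV] assms by auto
qed

text \<open>The common midpoint lies on the edge \<open>F\<close>, hence so does \<open>a\<close>; and a 0/1 point on the line
  through two distinct 0/1 points is one of them.\<close>

lemma binary_midpoint_of_edge:
  fixes x y a b :: "real^'n"
  assumes F: "F face_of S" "aff_dim F = 1" "x \<in> F" "y \<in> F" "x \<noteq> y"
    and ab: "a \<in> S" "b \<in> S" "a + b = x + y"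
    and bin: "a \<in> binary_vecs" "b \<in> binary_vecs" "x \<in> binary_vecs" "y \<in> binary_vecs"
  shows "a = x \<or> a = y"
proof -
  obtain i where i: "x$i \<noteq> y$i"
    using F(5) by (auto simp: vec_eq_iff)
  have bin_i: "x$i = 0 \<or> x$i = 1" "y$i = 0 \<or> y$i = 1" "a$i = 0 \<or> a$i = 1" "b$i = 0 \<or> b$i = 1"
    using bin by (auto simp: binary_vecs_def)
  have "a$i + b$i = x$i + y$i"
    using ab(3) by (metis vector_add_component)
  then have "a \<noteq> b"
    using bin_i i by auto
  have "closed_segment x y \<subseteq> F"
    using face_of_imp_convex[OF F(1)] F(3,4) by (simp add: convex_contains_segment)
  then have "midpoint x y \<in> F"
    using midpoint_in_closed_segment by blast
  moreover have "midpoint a b = midpoint x y"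
    using ab(3) by (simp add: midpoint_def)
  moreover have "midpoint a b \<in> open_segment a b"
    using \<open>a \<noteq> b\<close> by simp
  ultimately have "a \<in> F"
    using face_ofD[OF F(1) _ ab(1,2)] by metis
  have "affine hull {x, y} = affine hull F"
    using F(2-5) by (intro affine_dim_equal) (auto simp: hull_mono aff_dim_affine_hull)
  then have "a \<in> affine hull {x, y}"
    using \<open>a \<in> F\<close> hull_subset[of F affine] by blast
  then obtain u v where uv: "a = u *\<^sub>R x + v *\<^sub>R y" "u + v = 1"
    using affine_hull_2[of x y] by blast
  then have "a$i = u * x$i + v * y$i"
    by simp
  then have "(u = 1 \<and> v = 0) \<or> (u = 0 \<and> v = 1)"
    using bin_i i uv(2) by auto
  then show ?thesis
    using uv(1) by auto
qed

section \<open>Walks and connectivity\<close>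

fun walk_edges :: "'v list \<Rightarrow> 'v set set" where
  "walk_edges (x # y # xs) = insert {x, y} (walk_edges (y # xs))"
| "walk_edges _ = {}"

lemma walk_edges_append_Cons:
  "walk_edges (xs @ y # ys) = walk_edges (xs @ [y]) \<union> walk_edges (y # ys)"
  by (induction xs rule: walk_edges.induct) auto

lemma walk_edges_conv_nth: "walk_edges xs = (\<lambda>i. {xs!i, xs!Suc i}) ` {..<length xs - 1}"
  by (induction xs rule: walk_edges.induct) (auto simp: lessThan_Suc_eq_insert_0 image_image)

lemma walk_edges_subset_set: "e \<in> walk_edges xs \<Longrightarrow> e \<subseteq> set xs"
  by (induction xs rule: walk_edges.induct) auto

lemma walk_edges_snoc: "xs \<noteq> [] \<Longrightarrow> walk_edges (xs @ [v]) = insert {last xs, v} (walk_edges xs)"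
  by (cases xs rule: rev_cases) (use walk_edges_append_Cons[of _ _ "[v]"] in auto)

lemma walk_edges_append:
  assumes "xs \<noteq> []" "ys \<noteq> []"
  shows "walk_edges (xs @ ys) = insert {last xs, hd ys} (walk_edges xs \<union> walk_edges ys)"
  using walk_edges_append_Cons[of xs "hd ys" "tl ys"] walk_edges_snoc[OF assms(1), of "hd ys"] assms(2)
  by simp

lemma walk_edges_rev: "walk_edges (rev xs) = walk_edges xs"
proof (induction xs rule: walk_edges.induct)
  case (1 x y xs)
  have "walk_edges (rev (x # y # xs)) = walk_edges (rev (y # xs)) \<union> {{y, x}}"
    using walk_edges_append_Cons[of "rev xs" y "[x]"] by simp
  then show ?case
    using 1 by (simp add: insert_commute)
qed auto

lemma gwalk_iff_walk_edges: "gwalk E xs \<longleftrightarrow> xs \<noteq> [] \<and> walk_edges xs \<subseteq> E"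
  by (auto simp: gwalk_def walk_edges_conv_nth)

lemma cycle_edges_eq_walk_edges:
  assumes "xs \<noteq> []"
  shows "cycle_edges xs = insert {last xs, hd xs} (walk_edges xs)"
proof -
  let ?n = "length xs"
  have wrap: "{xs!(?n - 1), xs!((?n - 1 + 1) mod ?n)} = {last xs, hd xs}"
    using assms by (simp add: last_conv_nth hd_conv_nth)
  have "{xs!i, xs!((i + 1) mod ?n)} \<in> insert {last xs, hd xs} (walk_edges xs)" if "i < ?n" for i
  proof (cases "Suc i < ?n")
    case True
    then show ?thesis by (auto simp: walk_edges_conv_nth)
  next
    case False
    then have "i = ?n - 1" using that by simp
    then show ?thesis using wrap by simp
  qed
  then have "cycle_edges xs \<subseteq> insert {last xs, hd xs} (walk_edges xs)"
    unfolding cycle_edges_def by auto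
  moreover have "{last xs, hd xs} \<in> cycle_edges xs"
    unfolding cycle_edges_def using wrap[symmetric] assms by force
  moreover have "walk_edges xs \<subseteq> cycle_edges xs"
    unfolding cycle_edges_def walk_edges_conv_nth by force
  ultimately show ?thesis
    by blast
qed

lemma simple_cycle_iff_cycle_edges:
  "simple_cycle E vs \<longleftrightarrow> 3 \<le> length vs \<and> distinct vs \<and> cycle_edges vs \<subseteq> E"
  unfolding simple_cycle_def cycle_edges_def by blast

definition walk_in :: "'v set set \<Rightarrow> 'v set \<Rightarrow> 'v \<Rightarrow> 'v \<Rightarrow> 'v list \<Rightarrow> bool" where
  "walk_in E A u v xs \<longleftrightarrow> xs \<noteq> [] \<and> walk_edges xs \<subseteq> E \<and> set xs \<subseteq> A \<and> hd xs = u \<and> last xs = v"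

definition connected_in :: "'v set set \<Rightarrow> 'v set \<Rightarrow> bool" where
  "connected_in E A \<longleftrightarrow> (\<forall>u\<in>A. \<forall>v\<in>A. \<exists>xs. walk_in E A u v xs)"

lemma gconnected_imp_connected_in: "gconnected V E \<Longrightarrow> connected_in E V"
  unfolding gconnected_def connected_in_def walk_in_def by (auto simp: gwalk_iff_walk_edges)

lemma walk_in_singleton: "u \<in> A \<Longrightarrow> walk_in E A u u [u]"
  by (simp add: walk_in_def)

lemma walk_in_endpoints: "walk_in E A u v xs \<Longrightarrow> u \<in> A \<and> v \<in> A"
  unfolding walk_in_def by (metis hd_in_set last_in_set subsetD)

lemma walk_in_rev: "walk_in E A u v xs \<Longrightarrow> walk_in E A v u (rev xs)"
  by (simp add: walk_in_def walk_edges_rev hd_rev last_rev)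

lemma walk_in_mono: "walk_in E A u v xs \<Longrightarrow> A \<subseteq> B \<Longrightarrow> walk_in E B u v xs"
  unfolding walk_in_def by blast

lemma walk_in_join:
  assumes "walk_in E A u v xs" "walk_in E A v w ys"
  shows "walk_in E A u w (xs @ tl ys)"
proof -
  obtain xs' ys' where xs: "xs = xs' @ [v]" and ys: "ys = v # ys'"
    using assms unfolding walk_in_def by (metis append_butlast_last_id list.collapse)
  show ?thesis
    using assms walk_edges_append_Cons[of xs' v ys'] unfolding xs ys walk_in_def by (cases xs') auto
qed

lemma walk_in_snoc:
  "walk_in E A u v xs \<Longrightarrow> {v, w} \<in> E \<Longrightarrow> w \<in> A \<Longrightarrow> walk_in E A u w (xs @ [w])"
  using walk_in_join[of E A u v xs w "[v, w]"] walk_in_endpoints[of E A u v xs]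
  by (simp add: walk_in_def)

lemma walk_in_crosses:
  "walk_in E A u v xs \<Longrightarrow> u \<in> X \<Longrightarrow> v \<notin> X \<Longrightarrow>
    \<exists>a b. {a, b} \<in> E \<and> a \<in> A \<and> b \<in> A \<and> a \<in> X \<and> b \<notin> X"
proof (induction xs arbitrary: u rule: walk_edges.induct)
  case (1 x y xs)
  then have "walk_in E A y v (y # xs)" "{x, y} \<in> E" "x = u" "x \<in> A" "y \<in> A"
    unfolding walk_in_def by auto
  then show ?case
    using 1 by (cases "y \<in> X") auto
qed (auto simp: walk_in_def)

lemma walk_in_distinct:
  "walk_in E A u v xs \<Longrightarrow> \<exists>ys. walk_in E A u v ys \<and> distinct ys"
proof (induction "length xs" arbitrary: xs rule: less_induct)
  case less
  show ?case
  proof (cases "distinct xs")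
    case False
    then obtain as y bs cs where xs: "xs = as @ [y] @ bs @ [y] @ cs"
      using not_distinct_decomp by blast
    let ?ys = "as @ y # cs"
    have "walk_edges xs = walk_edges (as @ [y]) \<union> walk_edges ((y # bs) @ y # cs)"
      unfolding xs using walk_edges_append_Cons[of as y "bs @ y # cs"] by simp
    also have "\<dots> = walk_edges (as @ [y]) \<union> walk_edges ((y # bs) @ [y]) \<union> walk_edges (y # cs)"
      using walk_edges_append_Cons[of "y # bs" y cs] by auto
    finally have "walk_edges ?ys \<subseteq> walk_edges xs"
      using walk_edges_append_Cons[of as y cs] by auto
    moreover have "hd ?ys = hd xs"
      unfolding xs by (cases as) auto
    moreover have "last ?ys = last xs"
      unfolding xs by (cases cs) auto
    ultimately have "walk_in E A u v ?ys"
      using less.prems unfolding walk_in_def xs by auto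
    moreover have "length ?ys < length xs"
      unfolding xs by simp
    ultimately show ?thesis
      using less.hyps by blast
  qed (use less.prems in blast)
qed

definition dist_in :: "'v set set \<Rightarrow> 'v set \<Rightarrow> 'v \<Rightarrow> 'v \<Rightarrow> nat" where
  "dist_in E A r v = (LEAST n. \<exists>xs. walk_in E A r v xs \<and> length xs = Suc n)"

lemma dist_in_shortest_walk:
  assumes "walk_in E A r v xs"
  obtains ys where "walk_in E A r v ys" "length ys = Suc (dist_in E A r v)"
proof -
  have "\<exists>n xs. walk_in E A r v xs \<and> length xs = Suc n"
    using assms unfolding walk_in_def by (metis length_greater_0_conv Suc_pred)
  then have "\<exists>ys. walk_in E A r v ys \<and> length ys = Suc (dist_in E A r v)"
    unfolding dist_in_def by (rule LeastI_ex)
  then show ?thesis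
    using that by blast
qed

lemma dist_in_le: "walk_in E A r v xs \<Longrightarrow> length xs = Suc n \<Longrightarrow> dist_in E A r v \<le> n"
  unfolding dist_in_def by (blast intro: Least_le)

lemma dist_in_self: "r \<in> A \<Longrightarrow> dist_in E A r r = 0"
  using dist_in_le[OF walk_in_singleton] by fastforce

lemma dist_in_pos:
  assumes "connected_in E A" "r \<in> A" "v \<in> A" "v \<noteq> r"
  shows "dist_in E A r v > 0"
proof -
  obtain xs where "walk_in E A r v xs"
    using assms(1-3) unfolding connected_in_def by blast
  then obtain ys where ys: "walk_in E A r v ys" "length ys = Suc (dist_in E A r v)"
    by (rule dist_in_shortest_walk)
  have "length ys \<noteq> Suc 0"
    using ys(1) assms(4) by (auto simp: walk_in_def length_Suc_conv)
  with ys(2) show ?thesis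
    by simp
qed

lemma dist_in_predecessor:
  assumes c: "connected_in E A" and r: "r \<in> A" and v: "v \<in> A" "v \<noteq> r"
  obtains p where "p \<in> A" "{p, v} \<in> E" "Suc (dist_in E A r p) = dist_in E A r v"
proof -
  obtain xs where "walk_in E A r v xs"
    using c r v unfolding connected_in_def by blast
  then obtain ys where ys: "walk_in E A r v ys" "length ys = Suc (dist_in E A r v)"
    by (rule dist_in_shortest_walk)
  then obtain zs where ysz: "ys = zs @ [v]"
    unfolding walk_in_def by (metis append_butlast_last_id)
  with ys v(2) have "zs \<noteq> []"
    unfolding walk_in_def by auto
  define p where "p = last zs"
  have zs: "walk_in E A r p zs" and pv: "{p, v} \<in> E"
    using ys(1) walk_edges_snoc[OF \<open>zs \<noteq> []\<close>] \<open>zs \<noteq> []\<close> unfolding ysz walk_in_def p_def by auto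
  have len: "length zs = dist_in E A r v"
    using ys(2) unfolding ysz by simp
  with \<open>zs \<noteq> []\<close> have "dist_in E A r v > 0"
    by (metis length_greater_0_conv)
  then have "dist_in E A r p \<le> dist_in E A r v - 1"
    using len by (intro dist_in_le[OF zs]) simp
  then have "dist_in E A r p < dist_in E A r v"
    using \<open>dist_in E A r v > 0\<close> by linarith
  moreover obtain ws where "walk_in E A r p ws" "length ws = Suc (dist_in E A r p)"
    using zs by (rule dist_in_shortest_walk)
  then have "dist_in E A r v \<le> Suc (dist_in E A r p)"
    using dist_in_le[OF walk_in_snoc[OF _ pv v(1)]] by simp
  ultimately have "Suc (dist_in E A r p) = dist_in E A r v"
    by simp
  then show ?thesis
    using that walk_in_endpoints[OF zs] pv by blast
qed

lemma connected_in_if_reachable_from: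
  assumes "\<And>u. u \<in> A \<Longrightarrow> \<exists>xs. walk_in E A r u xs"
  shows "connected_in E A"
  unfolding connected_in_def
proof (intro ballI)
  fix u v assume "u \<in> A" "v \<in> A"
  with assms obtain xs ys where "walk_in E A r u xs" "walk_in E A r v ys"
    by blast
  then show "\<exists>zs. walk_in E A u v zs"
    by (blast intro: walk_in_join walk_in_rev)
qed

lemma connected_in_singleton: "connected_in E {z}"
  unfolding connected_in_def using walk_in_singleton[of z "{z}" E] by blast

lemma connected_in_insert:
  assumes c: "connected_in E B" and p: "p \<in> B" and e: "{z, p} \<in> E"
  shows "connected_in E (insert z B)"
proof (rule connected_in_if_reachable_from)
  fix u assume u: "u \<in> insert z B"
  have "walk_in E (insert z B) p z [p, z]"
    using e p by (simp add: walk_in_def insert_commute)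
  moreover have "\<exists>xs. walk_in E (insert z B) p u xs" if "u \<in> B"
    using c p that walk_in_mono[of E B p u] unfolding connected_in_def by blast
  ultimately show "\<exists>xs. walk_in E (insert z B) p u xs"
    using u by blast
qed

lemma walk_in_avoiding_farthest:
  assumes c: "connected_in E A" and r: "r \<in> A"
    and z_max: "\<And>u. u \<in> A \<Longrightarrow> dist_in E A r u \<le> dist_in E A r z"
    and u: "u \<in> A - {z}"
  shows "\<exists>xs. walk_in E (A - {z}) r u xs"
  using u
proof (induction "dist_in E A r u" arbitrary: u)
  case 0
  then have "u = r"
    using dist_in_pos[OF c r, of u] by (cases "u = r") auto
  with 0 have "walk_in E (A - {z}) r u [u]"
    by (simp add: walk_in_singleton)
  then show ?case ..
next
  case (Suc k)
  then have "u \<noteq> r" "u \<in> A"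
    using dist_in_self[OF r] by auto
  then obtain p where p: "p \<in> A" "{p, u} \<in> E" "Suc (dist_in E A r p) = dist_in E A r u"
    using dist_in_predecessor[OF c r] by blast
  then have "p \<in> A - {z}"
    using z_max[of u] Suc.prems by auto
  moreover have "k = dist_in E A r p"
    using Suc.hyps(2) p(3) by simp
  ultimately obtain xs where "walk_in E (A - {z}) r p xs"
    using Suc.hyps(1) by blast
  from walk_in_snoc[OF this p(2)] show ?case
    using Suc.prems by blast
qed

text \<open>A vertex at maximal distance from a fixed root is not a cut vertex.\<close>

lemma connected_in_remove_vertex:
  assumes fin: "finite A" and c: "connected_in E A" and two: "card A \<ge> 2"
  obtains z p where "z \<in> A" "p \<in> A - {z}" "{z, p} \<in> E" "connected_in E (A - {z})"
proof -
  have "A \<noteq> {}"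
    using two by (intro notI) simp
  then obtain r where r: "r \<in> A"
    by blast
  let ?d = "dist_in E A r"
  have fin_d: "finite (?d ` A)"
    using fin by simp
  obtain z where "z \<in> A" "?d z = Max (?d ` A)"
    using Max_in[OF fin_d] r by (metis empty_iff image_iff)
  then have z_max: "?d u \<le> ?d z" if "u \<in> A" for u
    using that Max_ge[OF fin_d] by simp
  obtain w where "w \<in> A" "w \<noteq> r"
    using two r card_le_Suc0_iff_eq[OF fin] by (metis not_less_eq_eq numeral_2_eq_2)
  then have "?d z > 0"
    using z_max[of w] dist_in_pos[OF c r, of w] by simp
  then have "z \<noteq> r"
    using dist_in_self[OF r] by auto
  obtain p where p: "p \<in> A" "{p, z} \<in> E" "Suc (?d p) = ?d z"
    using dist_in_predecessor[OF c r \<open>z \<in> A\<close> \<open>z \<noteq> r\<close>] by blast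
  then have "p \<noteq> z"
    by auto
  show ?thesis
  proof (rule that)
    show "connected_in E (A - {z})"
      using walk_in_avoiding_farthest[OF c r z_max] by (rule connected_in_if_reachable_from)
  qed (use \<open>z \<in> A\<close> p \<open>p \<noteq> z\<close> in \<open>auto simp: insert_commute\<close>)
qed

section \<open>Cuts and cut vectors\<close>

lemma card_Int_doubleton_eq_1: "a \<noteq> b \<Longrightarrow> card ({a, b} \<inter> S) = 1 \<longleftrightarrow> (a \<in> S \<longleftrightarrow> b \<notin> S)"
  by (cases "a \<in> S"; cases "b \<in> S") (simp_all add: Int_insert_left)

lemma graph_edgeE:
  assumes "graph V E" "e \<in> E"
  obtains a b where "e = {a, b}" "a \<noteq> b" "a \<in> V" "b \<in> V"
proof -
  have "e \<subseteq> V" "card e = 2"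
    using assms unfolding graph_def by auto
  then show ?thesis
    using that by (metis card_2_iff insert_subset)
qed

lemma doubleton_in_delta_iff:
  "a \<noteq> b \<Longrightarrow> {a, b} \<in> delta E S \<longleftrightarrow> {a, b} \<in> E \<and> (a \<in> S \<longleftrightarrow> b \<notin> S)"
  unfolding delta_def using card_Int_doubleton_eq_1[of a b S] by simp

lemma delta_subset: "delta E S \<subseteq> E"
  by (auto simp: delta_def)

lemma finite_delta: "graph V E \<Longrightarrow> finite (delta E S)"
  unfolding graph_def using delta_subset[of E S]
  by (meson Pow_iff finite_Pow_iff finite_subset subsetI)

lemma delta_empty [simp]: "delta E {} = {}"
  by (simp add: delta_def)

lemma delta_sym_diff:
  assumes "graph V E"
  shows "delta E (sym_diff S U) = sym_diff (delta E S) (delta E U)"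
proof (intro set_eqI)
  fix e
  show "e \<in> delta E (sym_diff S U) \<longleftrightarrow> e \<in> sym_diff (delta E S) (delta E U)"
  proof (cases "e \<in> E")
    case True
    obtain a b where "e = {a, b}" "a \<noteq> b" "a \<in> V" "b \<in> V"
      using assms True by (rule graph_edgeE)
    then show ?thesis
      using True by (auto simp: doubleton_in_delta_iff)
  qed (auto simp: delta_def)
qed

lemma delta_complement:
  assumes "graph V E"
  shows "delta E (V - S) = delta E S"
proof (intro set_eqI)
  fix e
  show "e \<in> delta E (V - S) \<longleftrightarrow> e \<in> delta E S"
  proof (cases "e \<in> E")
    case True
    obtain a b where "e = {a, b}" "a \<noteq> b" "a \<in> V" "b \<in> V"
      using assms True by (rule graph_edgeE)
    then show ?thesis
      using True by (auto simp: doubleton_in_delta_iff)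
  qed (auto simp: delta_def)
qed

lemma delta_vertex_set: "graph V E \<Longrightarrow> delta E V = {}"
  using delta_complement[of V E "{}"] by simp

lemma edge_notin_delta:
  assumes "graph V E" "e \<subseteq> U \<or> e \<inter> U = {}"
  shows "e \<notin> delta E U"
proof
  assume "e \<in> delta E U"
  then have "card e = 2" "card (e \<inter> U) = 1"
    using assms(1) delta_subset unfolding graph_def delta_def by auto
  then show False
    using assms(2) by (auto simp: Int_absorb2)
qed

lemma delta_edgeE:
  assumes "graph V E" "e \<in> delta E U"
  obtains a b where "e = {a, b}" "a \<in> U" "b \<in> V - U"
proof -
  obtain a b where ab: "e = {a, b}" "a \<noteq> b" "a \<in> V" "b \<in> V"
    using assms delta_subset by (metis graph_edgeE subsetD)
  then have "a \<in> U \<longleftrightarrow> b \<notin> U"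
    using assms(2) by (simp add: doubleton_in_delta_iff)
  then show ?thesis
    using that ab by (metis DiffI insert_commute)
qed

lemma cut_vec_nth: "cut_vec E S $ e = (if e \<in> delta E S then 1 else 0)"
  by (simp add: cut_vec_def)

lemma cut_vec_eq_iff: "cut_vec E S = cut_vec E T \<longleftrightarrow> delta E S = delta E T"
  by (auto simp: vec_eq_iff cut_vec_nth split: if_splits)

lemma cut_vec_binary: "cut_vec E S \<in> binary_vecs"
  by (simp add: binary_vecs_def cut_vec_nth)

definition cut_vecs :: "'v set \<Rightarrow> 'v set set \<Rightarrow> (real ^ ('v::finite set)) set" where
  "cut_vecs V E = {cut_vec E S | S. S \<subseteq> V}"

lemma cut_vec_in_cut_vecs: "S \<subseteq> V \<Longrightarrow> cut_vec E S \<in> cut_vecs V E"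
  unfolding cut_vecs_def by blast

lemma CUT_eq_convex_hull_cut_vecs: "CUT V E = convex hull cut_vecs V E"
  by (simp add: CUT_def cut_vecs_def)

lemma finite_cut_vecs: "finite (cut_vecs V E)"
proof -
  have "cut_vecs V E = cut_vec E ` Pow V"
    unfolding cut_vecs_def by blast
  then show ?thesis
    by simp
qed

lemma cut_vecs_binary: "cut_vecs V E \<subseteq> binary_vecs"
  unfolding cut_vecs_def using cut_vec_binary by blast

lemma poly_vertices_CUT: "poly_vertices (CUT V E) = cut_vecs V E"
proof
  show "poly_vertices (CUT V E) \<subseteq> cut_vecs V E"
    unfolding poly_vertices_def CUT_eq_convex_hull_cut_vecs
    by (auto simp: face_of_singleton dest: extreme_point_of_convex_hull)
  show "cut_vecs V E \<subseteq> poly_vertices (CUT V E)"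
    unfolding poly_vertices_def CUT_eq_convex_hull_cut_vecs
    using face_of_convex_hull_binary_singleton[OF finite_cut_vecs cut_vecs_binary] by blast
qed

section \<open>Decomposition into bond shores\<close>

fun sym_diff_list :: "'a set list \<Rightarrow> 'a set" where
  "sym_diff_list [] = {}"
| "sym_diff_list (U # Us) = sym_diff U (sym_diff_list Us)"

lemma mem_sym_diff_list_append:
  "x \<in> sym_diff_list (Us @ Ws) \<longleftrightarrow> (x \<in> sym_diff_list Us \<longleftrightarrow> x \<notin> sym_diff_list Ws)"
  by (induction Us) auto

lemma mem_sym_diff_list_map:
  "(\<And>U. U \<in> set Us \<Longrightarrow> x \<in> f U \<longleftrightarrow> x \<in> U) \<Longrightarrow>
    x \<in> sym_diff_list (map f Us) \<longleftrightarrow> x \<in> sym_diff_list Us"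
  by (induction Us) auto

text \<open>For connected \<open>A\<close>, \<open>\<delta>(U)\<close> is a bond (an inclusion-minimal nonempty cut) exactly when
  \<open>U\<close> is a bond shore.\<close>

definition bond_shore :: "'v set set \<Rightarrow> 'v set \<Rightarrow> 'v set \<Rightarrow> bool" where
  "bond_shore E A U \<longleftrightarrow> U \<subseteq> A \<and> U \<noteq> {} \<and> A - U \<noteq> {} \<and> connected_in E U \<and> connected_in E (A - U)"

lemma bond_shore_insert_vertex:
  assumes U: "bond_shore E (A - {z}) U" and z: "z \<in> A" and p: "p \<in> A - {z}" "{z, p} \<in> E"
  shows "bond_shore E A (if p \<in> U then insert z U else U)"
proof (cases "p \<in> U")
  case True
  have "A - insert z U = (A - {z}) - U"
    by blast
  then show ?thesis
    using U True z p(2) connected_in_insert[of E U p z] unfolding bond_shore_def by auto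
next
  case False
  have "A - U = insert z ((A - {z}) - U)"
    using U z unfolding bond_shore_def by blast
  then show ?thesis
    using U False z p connected_in_insert[of E "(A - {z}) - U" p z] unfolding bond_shore_def by auto
qed

text \<open>Shores of \<open>A - {z}\<close> lift to \<open>A\<close> by adding \<open>z\<close> to those containing its neighbour \<open>p\<close>;
  one extra shore \<open>{z}\<close> corrects the membership of \<open>z\<close>.\<close>

lemma bond_shores_insert_vertex:
  assumes z: "z \<in> A" and p: "p \<in> A - {z}" "{z, p} \<in> E" and c: "connected_in E (A - {z})"
    and Us: "\<forall>U\<in>set Us. bond_shore E (A - {z}) U" and T: "T - {z} = sym_diff_list Us"
  obtains Ws where "length Ws \<le> Suc (length Us)" "\<forall>W\<in>set Ws. bond_shore E A W"
    "sym_diff_list Ws = T"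
proof -
  define lift where "lift U = (if p \<in> U then insert z U else U)" for U
  define Ws' where "Ws' = map lift Us"
  define Ws where "Ws = Ws' @ (if z \<in> sym_diff_list Ws' \<longleftrightarrow> z \<in> T then [] else [{z}])"
  have "bond_shore E A (lift U)" if "U \<in> set Us" for U
    unfolding lift_def using Us that by (intro bond_shore_insert_vertex[OF _ z p]) blast
  then have "bond_shore E A W" if "W \<in> set Ws'" for W
    using that unfolding Ws'_def by auto
  moreover have "bond_shore E A {z}"
    using z p c connected_in_singleton unfolding bond_shore_def by auto
  ultimately have "\<forall>W\<in>set Ws. bond_shore E A W"
    unfolding Ws_def by auto
  moreover have "x \<in> sym_diff_list Ws \<longleftrightarrow> x \<in> T" for x
  proof (cases "x = z")
    case False
    have "x \<in> sym_diff_list Ws' \<longleftrightarrow> x \<in> sym_diff_list Us"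
      unfolding Ws'_def using False by (intro mem_sym_diff_list_map) (auto simp: lift_def)
    then show ?thesis
      using False T unfolding Ws_def by (auto simp: mem_sym_diff_list_append)
  qed (auto simp: Ws_def mem_sym_diff_list_append)
  moreover have "length Ws \<le> Suc (length Us)"
    unfolding Ws_def Ws'_def by simp
  ultimately show ?thesis
    using that by blast
qed

lemma bond_shore_decomposition:
  assumes "finite A" "connected_in E A" "A \<noteq> {}" "W \<subseteq> A"
  obtains Us where "length Us \<le> card A - 1" "\<forall>U\<in>set Us. bond_shore E A U"
    "sym_diff_list Us = W \<or> sym_diff_list Us = A - W"
  using assms
proof (induction "card A" arbitrary: A W thesis rule: less_induct)
  case less
  show ?case
  proof (cases "card A \<ge> 2")
    case False
    with less.prems(2,4) obtain a where "A = {a}"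
      by (metis One_nat_def card_1_singletonE card_eq_0_iff less_2_cases not_le)
    then have "sym_diff_list [] = W \<or> sym_diff_list [] = A - W"
      using less.prems(5) by auto
    then show ?thesis
      using less.prems(1)[of "[]"] by simp
  next
    case True
    then obtain z p where z: "z \<in> A" and p: "p \<in> A - {z}" "{z, p} \<in> E"
      and c: "connected_in E (A - {z})"
      using connected_in_remove_vertex[OF less.prems(2,3)] by blast
    have "card (A - {z}) < card A"
      using z less.prems(2) by (meson card_Diff1_less)
    then obtain Us where Us: "length Us \<le> card (A - {z}) - 1" "\<forall>U\<in>set Us. bond_shore E (A - {z}) U"
      "sym_diff_list Us = W - {z} \<or> sym_diff_list Us = (A - {z}) - (W - {z})"
      using less.hyps[of "A - {z}" "W - {z}"] less.prems(2,5) c p by blast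
    then obtain T where T: "T = W \<or> T = A - W" "T - {z} = sym_diff_list Us"
      by blast
    obtain Ws where "length Ws \<le> Suc (length Us)" "\<forall>W\<in>set Ws. bond_shore E A W"
        "sym_diff_list Ws = T"
      using bond_shores_insert_vertex[OF z p c Us(2) T(2)] by blast
    moreover have "Suc (length Us) \<le> card A - 1"
      using Us(1) z True by (simp add: card_Diff_singleton)
    ultimately show ?thesis
      using less.prems(1) T(1) by (metis le_trans)
  qed
qed

section \<open>Edges of the cut polytope\<close>

lemma walk_in_crosses_delta:
  assumes "walk_in E A u w xs" "u \<in> X" "w \<notin> X"
  obtains a b where "{a, b} \<in> delta E X" "a \<in> A" "b \<in> A" "a \<in> X" "b \<notin> X"
proof -
  obtain a b where ab: "{a, b} \<in> E" "a \<in> A" "b \<in> A" "a \<in> X" "b \<notin> X"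
    using walk_in_crosses[OF assms] by blast
  then have "{a, b} \<in> delta E X"
    by (subst doubleton_in_delta_iff) auto
  with ab show ?thesis
    using that by blast
qed

lemma delta_nonempty:
  assumes "connected_in E V" "u \<in> V" "u \<in> U" "w \<in> V" "w \<notin> U"
  shows "delta E U \<noteq> {}"
proof -
  obtain xs where "walk_in E V u w xs"
    using assms(1,2,4) unfolding connected_in_def by blast
  then show ?thesis
    using assms(3,5) by (metis walk_in_crosses_delta empty_iff)
qed

lemma connected_in_subset_or_disjoint:
  assumes "connected_in E Z" "Z \<subseteq> U \<or> Z \<inter> U = {}" "delta E X \<subseteq> delta E U"
  shows "Z \<subseteq> X \<or> Z \<inter> X = {}"
proof (rule ccontr)
  assume "\<not> (Z \<subseteq> X \<or> Z \<inter> X = {})"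
  then obtain u w where "u \<in> Z" "u \<in> X" "w \<in> Z" "w \<notin> X"
    by blast
  then obtain xs where "walk_in E Z u w xs"
    using assms(1) unfolding connected_in_def by blast
  then obtain a b where "{a, b} \<in> delta E X" "a \<in> Z" "b \<in> Z" "a \<in> X" "b \<notin> X"
    using \<open>u \<in> X\<close> \<open>w \<notin> X\<close> by (rule walk_in_crosses_delta)
  then have "{a, b} \<in> delta E U" "a \<noteq> b"
    using assms(3) by auto
  then show False
    using assms(2) \<open>a \<in> Z\<close> \<open>b \<in> Z\<close> by (auto simp: doubleton_in_delta_iff)
qed

text \<open>\<open>X\<close> separates neither of the connected sides \<open>U\<close> and \<open>V - U\<close>.\<close>

lemma delta_subset_delta_bond_shore:
  assumes g: "graph V E" and U: "bond_shore E V U" and X: "X \<subseteq> V" "delta E X \<subseteq> delta E U"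
  shows "delta E X = {} \<or> delta E X = delta E U"
proof -
  have "U \<subseteq> X \<or> U \<inter> X = {}" "V - U \<subseteq> X \<or> (V - U) \<inter> X = {}"
    using U connected_in_subset_or_disjoint[OF _ _ X(2)] unfolding bond_shore_def by auto
  then have "X = {} \<or> X = U \<or> X = V - U \<or> X = V"
    using U X(1) unfolding bond_shore_def by blast
  then show ?thesis
    using delta_vertex_set[OF g] delta_complement[OF g, of U] by auto
qed

lemma cut_vecs_agreeing_outside_bond:
  assumes g: "graph V E" and S: "S \<subseteq> V" and U: "bond_shore E V U"
  shows "{a \<in> cut_vecs V E. \<forall>e\<in>- delta E U. a$e = cut_vec E S $ e}
    = {cut_vec E S, cut_vec E (sym_diff S U)}"
proof -
  have U_sub: "U \<subseteq> V"
    using U unfolding bond_shore_def by auto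
  show ?thesis
  proof (intro equalityI subsetI)
    fix a assume "a \<in> {a \<in> cut_vecs V E. \<forall>e\<in>- delta E U. a$e = cut_vec E S $ e}"
    then obtain R where R: "R \<subseteq> V" "a = cut_vec E R"
      and agree: "\<forall>e\<in>- delta E U. cut_vec E R $ e = cut_vec E S $ e"
      unfolding cut_vecs_def by blast
    have "delta E (sym_diff S R) \<subseteq> delta E U"
    proof
      fix e assume e: "e \<in> delta E (sym_diff S R)"
      show "e \<in> delta E U"
      proof (rule ccontr)
        assume "e \<notin> delta E U"
        then have "cut_vec E R $ e = cut_vec E S $ e"
          using agree by blast
        moreover have "e \<in> sym_diff (delta E S) (delta E R)"
          using e unfolding delta_sym_diff[OF g] .
        ultimately show False
          by (auto simp: cut_vec_nth)
      qed
    qed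
    moreover have "sym_diff S R \<subseteq> V"
      using S R(1) by blast
    ultimately have "delta E (sym_diff S R) = {} \<or> delta E (sym_diff S R) = delta E U"
      using delta_subset_delta_bond_shore[OF g U] by blast
    moreover have "R = sym_diff S (sym_diff S R)"
      by blast
    then have "delta E R = sym_diff (delta E S) (delta E (sym_diff S R))"
      using delta_sym_diff[OF g] by metis
    ultimately have "delta E R = delta E S \<or> delta E R = delta E (sym_diff S U)"
      using delta_sym_diff[OF g, of S U] by auto
    then show "a \<in> {cut_vec E S, cut_vec E (sym_diff S U)}"
      using R(2) cut_vec_eq_iff by blast
  next
    fix a assume "a \<in> {cut_vec E S, cut_vec E (sym_diff S U)}"
    moreover have "sym_diff S U \<subseteq> V"
      using S U_sub by blast
    moreover have "cut_vec E (sym_diff S U) $ e = cut_vec E S $ e" if "e \<notin> delta E U" for e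
      using that by (auto simp: delta_sym_diff[OF g] cut_vec_nth)
    ultimately show "a \<in> {a \<in> cut_vecs V E. \<forall>e\<in>- delta E U. a$e = cut_vec E S $ e}"
      using S unfolding cut_vecs_def by auto
  qed
qed

lemma skel_adj_CUT_sym_diff_bond_shore:
  assumes g: "graph V E" and c: "connected_in E V" and S: "S \<subseteq> V" and U: "bond_shore E V U"
  shows "skel_adj (CUT V E) (cut_vec E S) (cut_vec E (sym_diff S U))"
proof -
  let ?x = "cut_vec E S" and ?y = "cut_vec E (sym_diff S U)"
  have "U \<subseteq> V" "sym_diff S U \<subseteq> V"
    using S U unfolding bond_shore_def by auto
  then have vertices: "?x \<in> poly_vertices (CUT V E)" "?y \<in> poly_vertices (CUT V E)"
    using S unfolding poly_vertices_CUT by (auto intro: cut_vec_in_cut_vecs)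
  have "delta E U \<noteq> {}"
    using U delta_nonempty[OF c] unfolding bond_shore_def by blast
  then have "?x \<noteq> ?y"
    unfolding cut_vec_eq_iff delta_sym_diff[OF g] by blast
  have "convex hull {?x, ?y} face_of CUT V E"
    using face_of_convex_hull_agreeing[OF finite_cut_vecs[of V E] cut_vecs_binary cut_vec_binary[of E S],
        where K = "- delta E U"]
    unfolding CUT_eq_convex_hull_cut_vecs cut_vecs_agreeing_outside_bond[OF g S U] .
  moreover have "aff_dim (convex hull {?x, ?y}) = 1"
    using \<open>?x \<noteq> ?y\<close> by (simp add: aff_dim_convex_hull)
  ultimately show ?thesis
    unfolding skel_adj_def using vertices \<open>?x \<noteq> ?y\<close> hull_subset[of "{?x, ?y}"] by blast
qed

text \<open>If \<open>\<delta>(S \<triangle> T)\<close> splits into the nonempty proper part \<open>\<delta>(X)\<close> and its remainder, the cuts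
  \<open>\<delta>(S \<triangle> X)\<close> and \<open>\<delta>(T \<triangle> X)\<close> have the same midpoint as \<open>\<delta>(S)\<close> and \<open>\<delta>(T)\<close>.\<close>

lemma not_skel_adj_CUT_if_delta_split:
  assumes g: "graph V E" and S: "S \<subseteq> V" and T: "T \<subseteq> V" and X: "X \<subseteq> V"
    and split: "delta E X \<subseteq> delta E (sym_diff S T)" "delta E X \<noteq> {}"
      "delta E X \<noteq> delta E (sym_diff S T)"
  shows "\<not> skel_adj (CUT V E) (cut_vec E S) (cut_vec E T)"
proof
  assume "skel_adj (CUT V E) (cut_vec E S) (cut_vec E T)"
  then obtain F where F: "F face_of CUT V E" "aff_dim F = 1" "cut_vec E S \<in> F" "cut_vec E T \<in> F"
    and ne: "cut_vec E S \<noteq> cut_vec E T"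
    unfolding skel_adj_def by blast
  let ?a = "cut_vec E (sym_diff S X)" and ?b = "cut_vec E (sym_diff T X)"
  have "sym_diff S X \<subseteq> V" "sym_diff T X \<subseteq> V"
    using S T X by auto
  then have ab: "?a \<in> CUT V E" "?b \<in> CUT V E"
    unfolding CUT_eq_convex_hull_cut_vecs by (blast intro: hull_inc cut_vec_in_cut_vecs)+
  have "delta E T = sym_diff (delta E S) (delta E (sym_diff S T))"
    unfolding delta_sym_diff[OF g] by blast
  then have "?a $ e + ?b $ e = cut_vec E S $ e + cut_vec E T $ e" for e
    using split(1) unfolding cut_vec_nth delta_sym_diff[OF g] by auto
  then have "?a + ?b = cut_vec E S + cut_vec E T"
    by (simp add: vec_eq_iff)
  then have "?a = cut_vec E S \<or> ?a = cut_vec E T"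
    using binary_midpoint_of_edge[OF F ne ab] cut_vec_binary by blast
  then show False
  proof
    assume "?a = cut_vec E S"
    then show False
      using split(2) unfolding cut_vec_eq_iff delta_sym_diff[OF g] by blast
  next
    assume "?a = cut_vec E T"
    then show False
      using split(1,3) unfolding cut_vec_eq_iff delta_sym_diff[OF g] by blast
  qed
qed

text \<open>Take for \<open>X\<close> a component of \<open>Z\<close>.\<close>

lemma delta_split_if_not_connected:
  assumes g: "graph V E" and c: "connected_in E V" and Z: "Z \<subseteq> V" "\<not> connected_in E Z"
  obtains X where "X \<subseteq> V" "delta E X \<subseteq> delta E Z" "delta E X \<noteq> {}" "delta E X \<noteq> delta E Z"
proof -
  obtain u w where u: "u \<in> Z" and w: "w \<in> Z" and no_walk: "\<nexists>xs. walk_in E Z u w xs"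
    using Z(2) unfolding connected_in_def by auto
  define X where "X = {v \<in> Z. \<exists>xs. walk_in E Z u v xs}"
  have closed: "b \<in> X" if ab: "a \<in> X" "b \<in> Z" "{a, b} \<in> E" for a b
  proof -
    obtain xs where "walk_in E Z u a xs"
      using ab(1) unfolding X_def by blast
    from walk_in_snoc[OF this ab(3,2)] show ?thesis
      unfolding X_def using ab(2) by blast
  qed
  have "X \<subseteq> Z" "u \<in> X" "w \<notin> X"
    using u walk_in_singleton[OF u, of E] no_walk unfolding X_def by auto
  have "delta E X \<subseteq> delta E Z"
  proof
    fix e assume e: "e \<in> delta E X"
    obtain a b where ab: "e = {a, b}" "a \<in> X" "b \<in> V - X"
      using g e by (rule delta_edgeE)
    moreover have "{a, b} \<in> E"
      using e delta_subset ab(1) by blast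
    then have "b \<notin> Z"
      using closed ab(2,3) by blast
    ultimately have "a \<in> Z" "b \<notin> Z" "a \<noteq> b"
      using \<open>X \<subseteq> Z\<close> by auto
    then show "e \<in> delta E Z"
      using ab(1) \<open>{a, b} \<in> E\<close> by (simp add: doubleton_in_delta_iff)
  qed
  moreover have "delta E X \<noteq> {}"
    using delta_nonempty[OF c] \<open>u \<in> X\<close> \<open>w \<notin> X\<close> u w Z(1) by blast
  moreover have "delta E X \<noteq> delta E Z"
  proof -
    obtain xs where "walk_in E V w u xs"
      using c u w Z(1) unfolding connected_in_def by blast
    moreover have "w \<in> Z - X" "u \<notin> Z - X"
      using w \<open>w \<notin> X\<close> \<open>u \<in> X\<close> by auto
    ultimately obtain a b where ab: "{a, b} \<in> delta E (Z - X)" "a \<in> Z - X" "b \<notin> Z - X"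
      by (rule walk_in_crosses_delta)
    then have "b \<notin> Z"
      using closed[of b a] delta_subset by (auto simp: insert_commute)
    moreover have "a \<noteq> b" "{a, b} \<in> E"
      using ab \<open>b \<notin> Z\<close> delta_subset by auto
    ultimately have "{a, b} \<in> delta E Z" "{a, b} \<notin> delta E X"
      using ab(2) \<open>X \<subseteq> Z\<close> by (auto simp: doubleton_in_delta_iff)
    then show ?thesis
      by blast
  qed
  ultimately show ?thesis
    using that \<open>X \<subseteq> Z\<close> Z(1) by blast
qed

lemma skel_adj_CUT_imp_bond_shore:
  assumes g: "graph V E" and c: "connected_in E V" and S: "S \<subseteq> V" and T: "T \<subseteq> V"
    and adj: "skel_adj (CUT V E) (cut_vec E S) (cut_vec E T)"
  shows "bond_shore E V (sym_diff S T)"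
proof -
  let ?U = "sym_diff S T"
  have U: "?U \<subseteq> V"
    using S T by blast
  have "delta E ?U \<noteq> {}"
    using adj unfolding skel_adj_def cut_vec_eq_iff delta_sym_diff[OF g] by blast
  then have "?U \<noteq> {}" "V - ?U \<noteq> {}"
    using delta_vertex_set[OF g] by (auto simp: Diff_eq_empty_iff subset_antisym[OF U])
  moreover have "connected_in E Z" if Z: "Z \<subseteq> V" "delta E Z = delta E ?U" for Z
  proof (rule ccontr)
    assume "\<not> connected_in E Z"
    then obtain X where "X \<subseteq> V" "delta E X \<subseteq> delta E ?U" "delta E X \<noteq> {}" "delta E X \<noteq> delta E ?U"
      using delta_split_if_not_connected[OF g c Z(1)] Z(2) by metis
    then show False
      using not_skel_adj_CUT_if_delta_split[OF g S T] adj by blast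
  qed
  then have "connected_in E ?U" "connected_in E (V - ?U)"
    using U delta_complement[OF g] by auto
  ultimately show ?thesis
    using U unfolding bond_shore_def by blast
qed

section \<open>Bonds of a cactus\<close>

lemma cactusD:
  assumes "cactus V E"
  shows "graph V E" "connected_in E V" "V \<noteq> {}"
proof -
  show "graph V E"
    using assms unfolding cactus_def by blast
  have "gconnected V E"
    using assms unfolding cactus_def by blast
  then show "connected_in E V"
    by (rule gconnected_imp_connected_in)
  show "V \<noteq> {}"
    using \<open>gconnected V E\<close> unfolding gconnected_def by blast
qed

text \<open>Join the two edges by a path inside \<open>U\<close> and a path inside \<open>V - U\<close>.\<close>

lemma simple_cycle_through_delta_edges:
  assumes g: "graph V E" and U: "connected_in E U" "connected_in E (V - U)"
    and a: "a \<in> U" "a' \<in> U" and b: "b \<in> V - U" "b' \<in> V - U"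
    and e: "{a, b} \<in> E" "{a', b'} \<in> E" "{a, b} \<noteq> {a', b'}"
  obtains C where "simple_cycle E C" "cycle_edges C \<inter> delta E U = {{a, b}, {a', b'}}"
proof -
  obtain P where P: "walk_in E U a a' P" "distinct P"
    using U(1) a walk_in_distinct unfolding connected_in_def by meson
  obtain Q where Q: "walk_in E (V - U) b b' Q" "distinct Q"
    using U(2) b walk_in_distinct unfolding connected_in_def by meson
  have PQ: "P \<noteq> []" "Q \<noteq> []" "hd P = a" "last P = a'" "hd Q = b" "last Q = b'"
    "set P \<subseteq> U" "set Q \<subseteq> V - U" "walk_edges P \<subseteq> E" "walk_edges Q \<subseteq> E"
    using P(1) Q(1) unfolding walk_in_def by auto
  define C where "C = P @ rev Q"
  have edges: "cycle_edges C = {{b, a}, {a', b'}} \<union> walk_edges P \<union> walk_edges Q"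
    using PQ unfolding C_def
    by (auto simp: cycle_edges_eq_walk_edges walk_edges_append walk_edges_rev hd_rev last_rev)
  have "distinct C"
    using P(2) Q(2) PQ(7,8) unfolding C_def by auto
  moreover have "3 \<le> length C"
  proof (rule ccontr)
    assume "\<not> 3 \<le> length C"
    then have "length P + length Q < 3"
      unfolding C_def by simp
    moreover have "length P > 0" "length Q > 0"
      using PQ(1,2) by auto
    ultimately have "length P = 1" "length Q = 1"
      by linarith+
    then have "a = a'" "b = b'"
      using PQ(3-6) by (auto simp: length_Suc_conv)
    then show False
      using e(3) by simp
  qed
  moreover have "cycle_edges C \<subseteq> E"
    using edges e PQ(9,10) by (auto simp: insert_commute)
  moreover have "cycle_edges C \<inter> delta E U = {{a, b}, {a', b'}}"
  proof -
    have "e \<notin> delta E U" if "e \<in> walk_edges P \<union> walk_edges Q" for e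
      using that walk_edges_subset_set PQ(7,8) by (intro edge_notin_delta[OF g]) blast
    moreover have "a \<noteq> b" "a' \<noteq> b'"
      using a b by auto
    then have "{a, b} \<in> delta E U" "{a', b'} \<in> delta E U"
      using a b e by (simp_all add: doubleton_in_delta_iff)
    ultimately show ?thesis
      unfolding edges by (auto simp: insert_commute)
  qed
  ultimately show ?thesis
    using that by (auto simp: simple_cycle_iff_cycle_edges)
qed

text \<open>Any three edges of a bond would give two different cycles through a common edge.\<close>

lemma cactus_card_delta_le_2:
  assumes cac: "cactus V E" and U: "bond_shore E V U"
  shows "card (delta E U) \<le> 2"
proof (rule ccontr)
  assume "\<not> card (delta E U) \<le> 2"
  have g: "graph V E"
    using cac by (rule cactusD)
  have "3 \<le> card (delta E U)"
    using \<open>\<not> card (delta E U) \<le> 2\<close> by simp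
  then obtain D where "D \<subseteq> delta E U" "card D = 3"
    by (metis obtain_subset_with_card_n)
  then obtain e1 e2 e3 where es: "e1 \<in> delta E U" "e2 \<in> delta E U" "e3 \<in> delta E U"
    "e1 \<noteq> e2" "e1 \<noteq> e3" "e2 \<noteq> e3"
    by (auto simp: card_3_iff)
  obtain a1 b1 where 1: "e1 = {a1, b1}" "a1 \<in> U" "b1 \<in> V - U"
    using g es(1) by (rule delta_edgeE)
  obtain a2 b2 where 2: "e2 = {a2, b2}" "a2 \<in> U" "b2 \<in> V - U"
    using g es(2) by (rule delta_edgeE)
  obtain a3 b3 where 3: "e3 = {a3, b3}" "a3 \<in> U" "b3 \<in> V - U"
    using g es(3) by (rule delta_edgeE)
  have conn: "connected_in E U" "connected_in E (V - U)" and "e1 \<in> E" "e2 \<in> E" "e3 \<in> E"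
    using U es delta_subset unfolding bond_shore_def by auto
  obtain C12 where C12: "simple_cycle E C12" "cycle_edges C12 \<inter> delta E U = {e1, e2}"
    using simple_cycle_through_delta_edges[OF g conn 1(2) 2(2) 1(3) 2(3)] 1(1) 2(1) es(4)
      \<open>e1 \<in> E\<close> \<open>e2 \<in> E\<close> by metis
  obtain C13 where C13: "simple_cycle E C13" "cycle_edges C13 \<inter> delta E U = {e1, e3}"
    using simple_cycle_through_delta_edges[OF g conn 1(2) 3(2) 1(3) 3(3)] 1(1) 3(1) es(5)
      \<open>e1 \<in> E\<close> \<open>e3 \<in> E\<close> by metis
  have "cycle_edges C12 = cycle_edges C13"
    using cac \<open>e1 \<in> E\<close> C12 C13 unfolding cactus_def by blast
  then show False
    using C12(2) C13(2) es by blast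
qed

section \<open>Distances in the 1-skeleton\<close>

lemma skel_walk_Cons:
  assumes "ys \<noteq> []"
  shows "skel_walk P (x # ys) \<longleftrightarrow> x \<in> poly_vertices P \<and> skel_adj P x (hd ys) \<and> skel_walk P ys"
  using assms by (auto simp: skel_walk_def hd_conv_nth less_Suc_eq_0_disj nth_Cons split: nat.split)

lemma skel_dist_le:
  assumes "skel_walk P xs" "hd xs = x" "last xs = y"
  shows "skel_dist P x y \<le> length xs - 1"
  unfolding skel_dist_def using assms by (intro Least_le) (auto simp: skel_walk_def)

lemma skel_dist_shortest_walk:
  assumes "skel_walk P xs" "hd xs = x" "last xs = y"
  obtains ys where "skel_walk P ys" "hd ys = x" "last ys = y" "length ys = skel_dist P x y + 1"
proof -
  have "\<exists>n ys. skel_walk P ys \<and> hd ys = x \<and> last ys = y \<and> length ys = n + 1"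
    using assms by (intro exI[of _ "length xs - 1"]) (auto simp: skel_walk_def)
  then have "\<exists>ys. skel_walk P ys \<and> hd ys = x \<and> last ys = y \<and> length ys = skel_dist P x y + 1"
    unfolding skel_dist_def by (rule LeastI_ex)
  then show ?thesis
    using that by blast
qed

lemma finite_skel_dists:
  assumes "finite (poly_vertices P)"
  shows "finite {skel_dist P x y | x y. x \<in> poly_vertices P \<and> y \<in> poly_vertices P}"
proof -
  have "{skel_dist P x y | x y. x \<in> poly_vertices P \<and> y \<in> poly_vertices P}
      = (\<lambda>(x, y). skel_dist P x y) ` (poly_vertices P \<times> poly_vertices P)"
    by auto
  then show ?thesis
    using assms by simp
qed

lemma skel_dist_le_skel_diameter:
  assumes "finite (poly_vertices P)" "x \<in> poly_vertices P" "y \<in> poly_vertices P"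
  shows "skel_dist P x y \<le> skel_diameter P"
proof -
  have "finite {skel_dist P x y | x y. x \<in> poly_vertices P \<and> y \<in> poly_vertices P}"
    using finite_skel_dists[OF assms(1)] .
  then show ?thesis
    unfolding skel_diameter_def using assms(2,3) by (intro Max_ge) auto
qed

lemma skel_diameter_le:
  assumes "finite (poly_vertices P)" "poly_vertices P \<noteq> {}"
    and "\<And>x y. x \<in> poly_vertices P \<Longrightarrow> y \<in> poly_vertices P \<Longrightarrow> skel_dist P x y \<le> n"
  shows "skel_diameter P \<le> n"
proof -
  have "finite {skel_dist P x y | x y. x \<in> poly_vertices P \<and> y \<in> poly_vertices P}"
    using finite_skel_dists[OF assms(1)] .
  then show ?thesis
    unfolding skel_diameter_def using assms(2,3) by (intro Max.boundedI) (auto, blast)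
qed

lemma skel_walk_CUT_sym_diff_bond_shores:
  assumes g: "graph V E" and c: "connected_in E V"
  shows "\<forall>U\<in>set Us. bond_shore E V U \<Longrightarrow> S \<subseteq> V \<Longrightarrow>
    \<exists>xs. skel_walk (CUT V E) xs \<and> hd xs = cut_vec E S \<and>
      last xs = cut_vec E (sym_diff S (sym_diff_list Us)) \<and> length xs = Suc (length Us)"
proof (induction Us arbitrary: S)
  case Nil
  then have "skel_walk (CUT V E) [cut_vec E S]"
    by (auto simp: skel_walk_def poly_vertices_CUT cut_vec_in_cut_vecs)
  then show ?case
    by fastforce
next
  case (Cons U Us)
  then have U: "bond_shore E V U" and "sym_diff S U \<subseteq> V"
    unfolding bond_shore_def by auto
  moreover have "\<forall>U\<in>set Us. bond_shore E V U"
    using Cons.prems(1) by simp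
  ultimately obtain ys where ys: "skel_walk (CUT V E) ys" "hd ys = cut_vec E (sym_diff S U)"
    "last ys = cut_vec E (sym_diff (sym_diff S U) (sym_diff_list Us))" "length ys = Suc (length Us)"
    using Cons.IH by blast
  have "ys \<noteq> []"
    using ys(4) by auto
  moreover have "skel_adj (CUT V E) (cut_vec E S) (hd ys)"
    unfolding ys(2) using g c Cons.prems(2) U by (rule skel_adj_CUT_sym_diff_bond_shore)
  moreover have "sym_diff (sym_diff S U) (sym_diff_list Us) = sym_diff S (sym_diff_list (U # Us))"
    by auto
  ultimately have "skel_walk (CUT V E) (cut_vec E S # ys) \<and> hd (cut_vec E S # ys) = cut_vec E S \<and>
      last (cut_vec E S # ys) = cut_vec E (sym_diff S (sym_diff_list (U # Us))) \<and>
      length (cut_vec E S # ys) = Suc (length (U # Us))"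
    using ys Cons.prems(2) by (auto simp: skel_walk_Cons poly_vertices_CUT cut_vec_in_cut_vecs)
  then show ?case
    by blast
qed

lemma short_skel_walk_CUT:
  assumes g: "graph V E" and c: "connected_in E V" and ne: "V \<noteq> {}"
    and x: "x \<in> poly_vertices (CUT V E)" and y: "y \<in> poly_vertices (CUT V E)"
  obtains xs where "skel_walk (CUT V E) xs" "hd xs = x" "last xs = y" "length xs \<le> card V"
proof -
  obtain S T where ST: "S \<subseteq> V" "T \<subseteq> V" "x = cut_vec E S" "y = cut_vec E T"
    using x y unfolding poly_vertices_CUT cut_vecs_def by blast
  have "finite V" "sym_diff S T \<subseteq> V"
    using g ST(1,2) unfolding graph_def by auto
  then obtain Us where Us: "length Us \<le> card V - 1" "\<forall>U\<in>set Us. bond_shore E V U"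
      "sym_diff_list Us = sym_diff S T \<or> sym_diff_list Us = V - sym_diff S T"
    using c ne by (metis bond_shore_decomposition)
  obtain xs where xs: "skel_walk (CUT V E) xs" "hd xs = x"
    "last xs = cut_vec E (sym_diff S (sym_diff_list Us))" "length xs = Suc (length Us)"
    using skel_walk_CUT_sym_diff_bond_shores[OF g c Us(2) ST(1)] ST(3) by blast
  have "sym_diff S (sym_diff_list Us) = T \<or> sym_diff S (sym_diff_list Us) = V - T"
    using Us(3) ST(1,2) by auto
  then have "last xs = y"
    using xs(3) ST(4) delta_complement[OF g, of T] cut_vec_eq_iff by metis
  moreover have "card V > 0"
    using ne \<open>finite V\<close> by (simp add: card_gt_0_iff)
  then have "length xs \<le> card V"
    using xs(4) Us(1) by linarith
  ultimately show ?thesis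
    using that xs(1,2) by blast
qed

lemma card_delta_skel_walk_CUT:
  assumes cac: "cactus V E"
  shows "skel_walk (CUT V E) xs \<Longrightarrow> hd xs = cut_vec E S \<Longrightarrow> last xs = cut_vec E T \<Longrightarrow> S \<subseteq> V \<Longrightarrow>
    card (delta E T) \<le> card (delta E S) + 2 * (length xs - 1)"
proof (induction xs arbitrary: S)
  case Nil
  then show ?case
    by (simp add: skel_walk_def)
next
  case (Cons x ys)
  have g: "graph V E" and c: "connected_in E V"
    using cactusD[OF cac] by auto
  show ?case
  proof (cases "ys = []")
    case True
    then have "cut_vec E S = cut_vec E T"
      using Cons.prems(2,3) by simp
    then have "delta E T = delta E S"
      unfolding cut_vec_eq_iff by simp
    then show ?thesis
      by simp
  next
    case False
    then have walk: "skel_walk (CUT V E) ys" and adj: "skel_adj (CUT V E) (cut_vec E S) (hd ys)"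
      using Cons.prems(1,2) by (auto simp: skel_walk_Cons)
    have "hd ys \<in> cut_vecs V E"
      using walk False hd_in_set[of ys] unfolding skel_walk_def poly_vertices_CUT by blast
    then obtain R where R: "R \<subseteq> V" "hd ys = cut_vec E R"
      unfolding cut_vecs_def by blast
    have "card (delta E (sym_diff S R)) \<le> 2"
      using adj cactus_card_delta_le_2[OF cac] skel_adj_CUT_imp_bond_shore[OF g c Cons.prems(4) R(1)]
      unfolding R(2) by blast
    moreover have "delta E R \<subseteq> delta E S \<union> delta E (sym_diff S R)"
      unfolding delta_sym_diff[OF g] by blast
    then have "card (delta E R) \<le> card (delta E S) + card (delta E (sym_diff S R))"
      using finite_delta[OF g] by (meson card_Un_le card_mono finite_UnI le_trans)
    moreover have "card (delta E T) \<le> card (delta E R) + 2 * (length ys - 1)"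
      using Cons.IH[OF walk R(2)] Cons.prems(3) False R(1) by simp
    moreover have "length (x # ys) - 1 = Suc (length ys - 1)"
      using False by simp
    ultimately show ?thesis
      by linarith
  qed
qed

text \<open>Coloring the vertices by the parity of their distance from a root cuts every edge
  between a vertex and its predecessor on a shortest path.\<close>

lemma large_cut_exists:
  assumes g: "graph V E" and c: "connected_in E V" and ne: "V \<noteq> {}"
  obtains S where "S \<subseteq> V" "card V - 1 \<le> card (delta E S)"
proof -
  obtain r where r: "r \<in> V"
    using ne by blast
  let ?d = "dist_in E V r"
  define S where "S = {u \<in> V. even (?d u)}"
  define pred where "pred v = (SOME p. p \<in> V \<and> {p, v} \<in> E \<and> Suc (?d p) = ?d v)" for v
  have pred: "pred v \<in> V" "{pred v, v} \<in> E" "Suc (?d (pred v)) = ?d v" if "v \<in> V - {r}" for v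
  proof -
    have "\<exists>p. p \<in> V \<and> {p, v} \<in> E \<and> Suc (?d p) = ?d v"
      using that dist_in_predecessor[OF c r] by (metis DiffD1 DiffD2 insertI1)
    then show "pred v \<in> V" "{pred v, v} \<in> E" "Suc (?d (pred v)) = ?d v"
      unfolding pred_def by (metis (mono_tags, lifting) someI_ex)+
  qed
  define tree_edge where "tree_edge v = {pred v, v}" for v
  have "tree_edge ` (V - {r}) \<subseteq> delta E S"
  proof
    fix e assume "e \<in> tree_edge ` (V - {r})"
    then obtain v where v: "v \<in> V - {r}" "e = tree_edge v"
      by blast
    have "even (?d (pred v)) \<longleftrightarrow> odd (?d v)"
      unfolding pred(3)[OF v(1), symmetric] by simp
    then have "pred v \<noteq> v" "pred v \<in> S \<longleftrightarrow> v \<notin> S"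
      using pred(1)[OF v(1)] v(1) unfolding S_def by auto
    then show "e \<in> delta E S"
      using pred(2)[OF v(1)] unfolding v(2) tree_edge_def by (simp add: doubleton_in_delta_iff)
  qed
  moreover have "inj_on tree_edge (V - {r})"
  proof (rule inj_onI)
    fix v w assume v: "v \<in> V - {r}" and w: "w \<in> V - {r}" and "tree_edge v = tree_edge w"
    then have "v = w \<or> (v = pred w \<and> w = pred v)"
      unfolding tree_edge_def by (auto simp: doubleton_eq_iff)
    then show "v = w"
      using pred(3)[OF v] pred(3)[OF w] by auto
  qed
  ultimately have "card (V - {r}) \<le> card (delta E S)"
    using card_inj_on_le finite_delta[OF g] by blast
  then show ?thesis
    using that[of S] r unfolding S_def by auto
qed

lemma skel_diameter_CUT_le:
  assumes g: "graph V E" and c: "connected_in E V" and ne: "V \<noteq> {}"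
  shows "skel_diameter (CUT V E) \<le> card V - 1"
proof (rule skel_diameter_le)
  show "finite (poly_vertices (CUT V E))"
    unfolding poly_vertices_CUT by (rule finite_cut_vecs)
  show "poly_vertices (CUT V E) \<noteq> {}"
    unfolding poly_vertices_CUT using cut_vec_in_cut_vecs[of "{}" V E] by blast
  fix x y assume "x \<in> poly_vertices (CUT V E)" "y \<in> poly_vertices (CUT V E)"
  then obtain xs where "skel_walk (CUT V E) xs" "hd xs = x" "last xs = y" "length xs \<le> card V"
    using short_skel_walk_CUT[OF g c ne] by blast
  then show "skel_dist (CUT V E) x y \<le> card V - 1"
    using skel_dist_le by fastforce
qed

lemma card_delta_le_skel_dist_CUT:
  assumes cac: "cactus V E" and S: "S \<subseteq> V"
  shows "card (delta E S) \<le> 2 * skel_dist (CUT V E) (cut_vec E {}) (cut_vec E S)"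
proof -
  have g: "graph V E" and c: "connected_in E V" and ne: "V \<noteq> {}"
    using cactusD[OF cac] by auto
  have "cut_vec E {} \<in> poly_vertices (CUT V E)" "cut_vec E S \<in> poly_vertices (CUT V E)"
    using S unfolding poly_vertices_CUT by (auto intro: cut_vec_in_cut_vecs)
  then obtain xs where "skel_walk (CUT V E) xs" "hd xs = cut_vec E {}" "last xs = cut_vec E S"
    using short_skel_walk_CUT[OF g c ne] by metis
  then obtain ys where ys: "skel_walk (CUT V E) ys" "hd ys = cut_vec E {}" "last ys = cut_vec E S"
    "length ys = skel_dist (CUT V E) (cut_vec E {}) (cut_vec E S) + 1"
    by (rule skel_dist_shortest_walk)
  then show ?thesis
    using card_delta_skel_walk_CUT[OF cac ys(1-3)] by simp
qed

theorem theorem4: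
  fixes V :: "('v::finite) set" and E :: "'v set set"
  assumes "cactus V E"
  shows "card V div 2 \<le> skel_diameter (CUT V E) \<and> skel_diameter (CUT V E) \<le> card V - 1"
proof -
  have g: "graph V E" and c: "connected_in E V" and ne: "V \<noteq> {}"
    using cactusD[OF assms] by auto
  obtain S where S: "S \<subseteq> V" "card V - 1 \<le> card (delta E S)"
    using large_cut_exists[OF g c ne] by blast
  have "card V - 1 \<le> 2 * skel_dist (CUT V E) (cut_vec E {}) (cut_vec E S)"
    using S(2) card_delta_le_skel_dist_CUT[OF assms S(1)] by linarith
  then have "card V div 2 \<le> skel_dist (CUT V E) (cut_vec E {}) (cut_vec E S)"
    by linarith
  also have "\<dots> \<le> skel_diameter (CUT V E)"
    using S(1) finite_cut_vecs by (intro skel_dist_le_skel_diameter)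
      (auto simp: poly_vertices_CUT intro: cut_vec_in_cut_vecs)
  finally show ?thesis
    using skel_diameter_CUT_le[OF g c ne] by blast
qed

end
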